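(* Let $W:\mathcal{X}\to\mathcal{Z}$ be a discrete memoryless channel and let $P_X\in\mathcal{P}_n(\mathcal{X})$. Let $\mathcal{C}_X$ be a codebook of size $M_X$ all of whose codewords lie in the type class $T_{P_X}$, with decoding sets (pairwise disjoint subsets of $\mathcal{Z}^n$), and suppose the distinct sequences in $\mathcal{C}_X$ are $\mathbf{x}_1,\dots,\mathbf{x}_M$, with $\mathbf{x}_i$ occurring $N_i$ times, $M_X=N_1+\cdots+N_M$, and $N_M\ge 2$. If $M_X\le|T_{P_X}|-1$, then there exist a sequence $\mathbf{x}\in T_{P_X}\setminus\{\mathbf{x}_1,\dots,\mathbf{x}_M\}$ and a codebook $\mathcal{C}'_X$ with decoding sets such that $|\mathcal{C}'_X|=|\mathcal{C}_X|$, $\mathcal{C}'_X$ contains $\mathbf{x}_i$ exactly $N'_i=N_i$ times for $i=1,\dots,M-1$, contains $\mathbf{x}_M$ exactly $N'_M=N_M-1$ times, contains $\mathbf{x}$ exactly once ($N'_{M+1}=1$), and $e(\mathcal{C}'_X,W)\le e(\mathcal{C}_X,W)$.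
   Context: $T_{P_X}$ denotes the set of sequences in $\mathcal{X}^n$ of type $P_X$, i.e. with empirical distribution $P_X$. For a single-user codebook $\mathcal{C}_X=(\mathbf{x}'_1,\dots,\mathbf{x}'_{M_X})$ (a list, possibly with repetitions) with pairwise disjoint decoding sets $D_1,\dots,D_{M_X}\subset\mathcal{Z}^n$, the average error probability is $e(\mathcal{C}_X,W)=\frac1{M_X}\sum_{m=1}^{M_X}W^n(D_m^c|\mathbf{x}'_m)$, where $W^n(\mathbf z|\mathbf x)=\prod_{t}W(z_t|x_t)$. *)

theory Defs
  imports Complex_Main
begin

definition seqs :: "nat \<Rightarrow> 'a list set" where
  "seqs n = {xs. length xs = n}"

(* discrete memoryless channel: stochastic matrix W x z = W(z|x) *)
definition is_channel :: "('x \<Rightarrow> 'z::finite \<Rightarrow> real) \<Rightarrow> bool" where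
  "is_channel W \<longleftrightarrow> (\<forall>x z. 0 \<le> W x z) \<and> (\<forall>x. (\<Sum>z\<in>UNIV. W x z) = 1)"

definition is_n_type :: "nat \<Rightarrow> ('x::finite \<Rightarrow> real) \<Rightarrow> bool" where
  "is_n_type n P \<longleftrightarrow> (\<forall>a. 0 \<le> P a) \<and> (\<Sum>a\<in>UNIV. P a) = 1
      \<and> (\<forall>a. \<exists>k::nat. real n * P a = real k)"

definition type_set :: "nat \<Rightarrow> ('x \<Rightarrow> real) \<Rightarrow> 'x list set" where
  "type_set n P = {xs. length xs = n \<and> (\<forall>a. real (count_list xs a) = real n * P a)}"

definition Wn :: "nat \<Rightarrow> ('x \<Rightarrow> 'z \<Rightarrow> real) \<Rightarrow> 'z list \<Rightarrow> 'x list \<Rightarrow> real" where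
  "Wn n W zs xs = (\<Prod>t<n. W (xs ! t) (zs ! t))"

definition valid_decoder :: "nat \<Rightarrow> 'x list list \<Rightarrow> (nat \<Rightarrow> 'z list set) \<Rightarrow> bool" where
  "valid_decoder n C D \<longleftrightarrow> (\<forall>m<length C. D m \<subseteq> seqs n)
      \<and> (\<forall>i<length C. \<forall>j<length C. i \<noteq> j \<longrightarrow> D i \<inter> D j = {})"

definition avg_error :: "nat \<Rightarrow> ('x \<Rightarrow> 'z \<Rightarrow> real) \<Rightarrow> 'x list list \<Rightarrow> (nat \<Rightarrow> 'z list set) \<Rightarrow> real" where
  "avg_error n W C D = (1 / real (length C)) *
     (\<Sum>m<length C. \<Sum>zs\<in>seqs n - D m. Wn n W zs (C ! m))"

end

theory Submission
  imports Defs
begin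

(* Since the codeword y = x_M occurs at least twice in C, pick two of its
   positions i \<noteq> j.  Replace the codeword at position j by a fresh sequence x of the
   type class (one exists because C has fewer entries than T_P has elements) and hand
   the decoding set of position j over to position i, leaving D'_j empty.  Position i
   still sends y and now decodes on D_i \<union> D_j, so it gains exactly the probability mass
   that position j loses; the total probability of correct decoding is unchanged, and so
   is the average error. *)

(* Overwriting position j with x removes one copy of xs!j and adds one copy of x;
   stated additively to avoid truncated subtraction. *)
lemma count_list_update:
  assumes "j < length xs"
  shows "count_list (xs[j := x]) y + (if xs ! j = y then 1 else 0)
       = count_list xs y + (if x = y then 1 else 0)"
proof -
  have "count_list xs y = count_list (take j xs @ xs ! j # drop (Suc j) xs) y"
    using id_take_nth_drop[OF assms] by (rule arg_cong)
  moreover have "xs[j := x] = take j xs @ x # drop (Suc j) xs"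
    using assms by (rule upd_conv_take_nth_drop)
  ultimately show ?thesis by simp
qed

lemma count_list_replace:
  assumes j: "j < length xs" and y: "xs ! j = y" and x: "x \<notin> set xs"
  shows "count_list (xs[j := x]) y = count_list xs y - 1"
    and "count_list (xs[j := x]) x = 1"
    and "a \<noteq> x \<Longrightarrow> a \<noteq> y \<Longrightarrow> count_list (xs[j := x]) a = count_list xs a"
proof -
  have xy: "x \<noteq> y" using x nth_mem[OF j] y by auto
  have upd: "count_list (xs[j := x]) b + (if y = b then 1 else 0)
           = count_list xs b + (if x = b then 1 else 0)" for b
    using count_list_update[OF j, of x b] y by simp
  show "count_list (xs[j := x]) y = count_list xs y - 1" using upd[of y] xy by simp
  show "count_list (xs[j := x]) x = 1" using upd[of x] xy x by simp
  show "a \<noteq> x \<Longrightarrow> a \<noteq> y \<Longrightarrow> count_list (xs[j := x]) a = count_list xs a"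
    using upd[of a] by simp
qed

lemma count_list_two_positions:
  assumes "count_list xs y \<ge> 2"
  obtains i j where "i < length xs" "j < length xs" "i \<noteq> j" "xs ! i = y" "xs ! j = y"
proof -
  define A where "A = {i. i < length xs \<and> xs ! i = y}"
  have "card A = count_list xs y"
    unfolding A_def count_list_eq_length_filter length_filter_conv_card
    by (simp add: eq_commute)
  with assms have "card A \<ge> 2" by simp
  then obtain i B where "A = insert i B" "i \<notin> B" "Suc 0 \<le> card B"
    by (auto simp: card_le_Suc_iff numeral_2_eq_2)
  moreover from this obtain j where "j \<in> B" by (auto simp: card_le_Suc_iff)
  ultimately have "i \<in> A" "j \<in> A" "i \<noteq> j" by auto
  then show ?thesis using that unfolding A_def by blast
qed

lemma finite_seqs: "finite (seqs n :: 'a::finite list set)"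
  unfolding seqs_def using finite_lists_length_eq[of "UNIV :: 'a set" n] by simp

lemma seqs_Suc: "seqs (Suc n) = (\<lambda>(z, zs). z # zs) ` (UNIV \<times> seqs n)"
  unfolding seqs_def by (auto simp: image_def length_Suc_conv)

lemma Wn_Cons: "Wn (Suc n) W (z # zs) (x # xs) = W x z * Wn n W zs xs"
  unfolding Wn_def by (simp only: prod.lessThan_Suc_shift) simp

(* W^n( . |xs) is a probability distribution on Z^n: the sum over the output
   sequences factorises into n sums of single-letter transition probabilities. *)
lemma sum_Wn:
  fixes W :: "'x \<Rightarrow> 'z::finite \<Rightarrow> real"
  assumes chan: "is_channel W" and len: "length xs = n"
  shows "(\<Sum>zs\<in>seqs n. Wn n W zs xs) = 1"
  using len
proof (induction xs arbitrary: n)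
  case Nil
  then show ?case by (simp add: seqs_def Wn_def)
next
  case (Cons x xs)
  then obtain m where n: "n = Suc m" and m: "length xs = m" by auto
  have inj: "inj_on (\<lambda>(z, zs). z # zs) (UNIV \<times> seqs m :: ('z \<times> 'z list) set)"
    by (auto simp: inj_on_def)
  have "(\<Sum>zs\<in>seqs n. Wn n W zs (x # xs))
        = (\<Sum>z\<in>UNIV. \<Sum>zs\<in>seqs m. W x z * Wn m W zs xs)"
    unfolding n seqs_Suc sum.reindex[OF inj]
    by (simp add: Wn_Cons sum.cartesian_product case_prod_beta)
  also have "\<dots> = (\<Sum>z\<in>UNIV. W x z)"
    by (simp add: sum_distrib_left[symmetric] Cons.IH[OF m])
  also have "\<dots> = 1" using chan unfolding is_channel_def by simp
  finally show ?case .
qed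

definition correct_mass :: "nat \<Rightarrow> ('x \<Rightarrow> 'z \<Rightarrow> real) \<Rightarrow> 'x list list
    \<Rightarrow> (nat \<Rightarrow> 'z list set) \<Rightarrow> real" where
  "correct_mass n W C D = (\<Sum>m<length C. \<Sum>zs\<in>D m. Wn n W zs (C ! m))"

lemma avg_error_correct_mass:
  fixes W :: "'x \<Rightarrow> 'z::finite \<Rightarrow> real"
  assumes chan: "is_channel W" and words: "set C \<subseteq> seqs n" and dec: "valid_decoder n C D"
  shows "avg_error n W C D = (1 / real (length C)) * (real (length C) - correct_mass n W C D)"
proof -
  have "(\<Sum>zs\<in>seqs n - D m. Wn n W zs (C ! m)) = 1 - (\<Sum>zs\<in>D m. Wn n W zs (C ! m))"
    if m: "m < length C" for m
  proof -
    have len: "length (C ! m) = n" using words nth_mem[OF m] by (auto simp: seqs_def)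
    have sub: "D m \<subseteq> seqs n" using dec m by (simp add: valid_decoder_def)
    show ?thesis
      using sum_diff[OF finite_seqs sub, of "\<lambda>zs. Wn n W zs (C ! m)"] sum_Wn[OF chan len]
      by simp
  qed
  then show ?thesis
    unfolding avg_error_def correct_mass_def by (simp add: sum_subtractf)
qed

definition merge_decoder :: "(nat \<Rightarrow> 'z set) \<Rightarrow> nat \<Rightarrow> nat \<Rightarrow> nat \<Rightarrow> 'z set" where
  "merge_decoder D i j = (\<lambda>m. if m = i then D i \<union> D j else if m = j then {} else D m)"

lemma valid_decoder_merge:
  assumes dec: "valid_decoder n C D" and "i < length C" "j < length C" "i \<noteq> j"
  shows "valid_decoder n (C[j := x]) (merge_decoder D i j)"
  using assms unfolding valid_decoder_def merge_decoder_def
  by (simp add: Int_Un_distrib Int_Un_distrib2)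

lemma correct_mass_merge:
  fixes D :: "nat \<Rightarrow> 'z::finite list set"
  assumes dec: "valid_decoder n C D" and i: "i < length C" and j: "j < length C"
    and ij: "i \<noteq> j" and same: "C ! i = C ! j"
  shows "correct_mass n W (C[j := x]) (merge_decoder D i j) = correct_mass n W C D"
proof -
  define w where "w m = (\<Sum>zs\<in>D m. Wn n W zs (C ! m))" for m
  have fin: "finite (D m)" if "m < length C" for m
    using dec that unfolding valid_decoder_def by (meson finite_seqs finite_subset)
  have disj: "D i \<inter> D j = {}" using dec i j ij unfolding valid_decoder_def by blast
  have "(\<Sum>zs\<in>merge_decoder D i j m. Wn n W zs (C[j := x] ! m))
        = w m + (if m = i then w j else 0) - (if m = j then w j else 0)"
    if "m < length C" for m
    using ij same fin[OF i] fin[OF j] disj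
    by (auto simp: merge_decoder_def w_def sum.union_disjoint)
  then have "correct_mass n W (C[j := x]) (merge_decoder D i j)
        = (\<Sum>m<length C. w m + (if m = i then w j else 0) - (if m = j then w j else 0))"
    unfolding correct_mass_def by simp
  also have "\<dots> = (\<Sum>m<length C. w m)"
    using i j by (simp add: sum.distrib sum_subtractf)
  finally show ?thesis unfolding correct_mass_def w_def .
qed

lemma finite_type_set: "finite (type_set n P :: 'x::finite list set)"
  by (rule finite_subset[OF _ finite_seqs[of n]]) (auto simp: type_set_def seqs_def)

lemma exists_fresh:
  assumes "finite T" "set C \<subseteq> T" "length C < card T"
  obtains x where "x \<in> T - set C"
proof -
  have "card (set C) < card T" using card_length assms(3) by (rule le_less_trans)
  then have "\<not> T \<subseteq> set C" using card_mono by fastforce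
  then show ?thesis using that by blast
qed

theorem lemma3:
  fixes W :: "'x::finite \<Rightarrow> 'z::finite \<Rightarrow> real"
    and P :: "'x \<Rightarrow> real"
    and n :: nat
    and C :: "'x list list"
    and D :: "nat \<Rightarrow> 'z list set"
    and xs :: "'x list list"
    and N :: "nat \<Rightarrow> nat"
  assumes chan: "is_channel W"
    and ntype: "is_n_type n P"
    and inT: "set C \<subseteq> type_set n P"
    and dec: "valid_decoder n C D"
    and dist: "distinct xs"
    and setC: "set C = set xs"
    and Mpos: "length xs \<ge> 1"
    and mult: "\<forall>i<length xs. count_list C (xs ! i) = N i"
    and NM: "N (length xs - 1) \<ge> 2"
    and size: "length C \<le> card (type_set n P) - 1"
  shows "\<exists>x C' D'. x \<in> type_set n P - set xs
     \<and> valid_decoder n C' D'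
     \<and> length C' = length C
     \<and> (\<forall>i<length xs - 1. count_list C' (xs ! i) = N i)
     \<and> count_list C' (xs ! (length xs - 1)) = N (length xs - 1) - 1
     \<and> count_list C' x = 1
     \<and> avg_error n W C' D' \<le> avg_error n W C D"
proof -
  define y where "y = xs ! (length xs - 1)"
  have "y \<in> set C" using setC Mpos unfolding y_def by simp
  then have "length C < card (type_set n P)" using size by (cases C) auto
  then obtain x where x: "x \<in> type_set n P - set xs"
    using exists_fresh[OF finite_type_set inT] setC by metis
  have "count_list C y \<ge> 2" using mult NM Mpos unfolding y_def by simp
  then obtain i j where ij: "i < length C" "j < length C" "i \<noteq> j" "C ! i = y" "C ! j = y"
    by (rule count_list_two_positions)
  define C' where "C' = C[j := x]"
  define D' where "D' = merge_decoder D i j"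
  have valid: "valid_decoder n C' D'"
    unfolding C'_def D'_def using valid_decoder_merge[OF dec ij(1-3)] .
  have "x \<notin> set C" using x setC by simp
  note counts = count_list_replace[OF ij(2) ij(5) this, folded C'_def]
  have kept: "count_list C' (xs ! k) = N k" if k: "k < length xs - 1" for k
  proof -
    have "xs ! k \<noteq> y" using k dist nth_eq_iff_index_eq unfolding y_def by fastforce
    moreover have "xs ! k \<noteq> x" using x k by auto
    ultimately show ?thesis using counts(3) mult k by simp
  qed
  have words: "set C \<subseteq> seqs n" "set C' \<subseteq> seqs n"
    using inT x set_update_subset_insert[of C j x]
    unfolding C'_def by (auto simp: type_set_def seqs_def)
  have "avg_error n W C' D' = avg_error n W C D"
    using avg_error_correct_mass[OF chan words(2) valid] avg_error_correct_mass[OF chan words(1) dec]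
      correct_mass_merge[OF dec ij(1-3)] ij(4,5) unfolding C'_def D'_def by simp
  then show ?thesis
    using x valid kept counts(1,2) mult Mpos unfolding y_def
    by (intro exI[of _ x] exI[of _ C'] exI[of _ D']) (simp add: C'_def)
qed

end
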